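(* Let $G=B_{n_0,\dots,n_g}$, let $E$ be an effective divisor supported on the non-multivalent vertices of $G$ with at most one chip on each strand, and let $e=\deg E$. Let $a,b$ be integers with $a\ge0$ and $0\le b\le g-e$. Then $$r(a v_{0,0}+b v_{0,n_0}+E)=\min\{a,b\}+\max\{0,\ \max\{a,b\}-(g-e)\}.$$
   Context: A graph is a finite, connected, loopless multigraph (parallel edges allowed); its genus is $g=|E(G)|-|V(G)|+1$. A divisor is an element of the free abelian group on $V(G)$. Linear equivalence is generated by chip-firing (firing $w$ subtracts $\mathrm{val}(w)$ chips from $w$ and adds to each other vertex the number of edges joining it to $w$). The rank $r(D)$ is $-1$ if $D$ is not equivalent to an effective divisor, else the largest $r\ge0$ such that $D-E'$ is equivalent to an effective divisor for every effective $E'$ of degree $r$. For positive integers $n_0,\dots,n_g$, the banana graph $B_{n_0,\dots,n_g}$ is obtained by joining two vertices by $g+1$ internally disjoint paths of lengths $n_0,\dots,n_g$; it has genus $g$. Its vertices are labelled $v_{\alpha,i}$ ($0\le\alpha\le g$, $0\le i\le n_\alpha$), with $v_{\alpha,i}$ at distance $i$ from $v_{0,0}$ along the $\alpha$-th path; $v_{\alpha,0}=v_{0,0}$ and $v_{\alpha,n_\alpha}=v_{0,n_0}$ for all $\alpha$ are the two multivalent vertices. The $\alpha$-th strand is $\{v_{\alpha,0},\dots,v_{\alpha,n_\alpha}\}$. *)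

theory Defs
  imports Main
begin

text \<open>A multigraph on the finite vertex set V is given by an edge-multiplicity
function m (m x y = number of edges joining x and y). Divisors are integer-valued
functions on vertices; only their values on V matter.\<close>

definition deg :: "'v set \<Rightarrow> ('v \<Rightarrow> int) \<Rightarrow> int" where
  "deg V D = (\<Sum>x\<in>V. D x)"

definition effective :: "'v set \<Rightarrow> ('v \<Rightarrow> int) \<Rightarrow> bool" where
  "effective V D \<longleftrightarrow> (\<forall>x\<in>V. D x \<ge> 0)"

text \<open>Linear equivalence generated by chip-firing: D' is obtained from D by firing
each vertex x exactly f x times (an integer, negative meaning reverse firing).
Firing w subtracts val(w) = sum of m w y from w and adds m x w to every other x.\<close>

definition lin_equiv :: "'v set \<Rightarrow> ('v \<Rightarrow> 'v \<Rightarrow> nat) \<Rightarrow> ('v \<Rightarrow> int) \<Rightarrow> ('v \<Rightarrow> int) \<Rightarrow> bool" where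
  "lin_equiv V m D D' \<longleftrightarrow>
     (\<exists>f :: 'v \<Rightarrow> int. \<forall>x\<in>V. D' x = D x - (\<Sum>y\<in>V. int (m x y) * (f x - f y)))"

definition rank_ge :: "'v set \<Rightarrow> ('v \<Rightarrow> 'v \<Rightarrow> nat) \<Rightarrow> ('v \<Rightarrow> int) \<Rightarrow> nat \<Rightarrow> bool" where
  "rank_ge V m D r \<longleftrightarrow>
     (\<forall>E'. effective V E' \<and> deg V E' = int r \<longrightarrow>
        (\<exists>D'. lin_equiv V m (\<lambda>x. D x - E' x) D' \<and> effective V D'))"

definition rank :: "'v set \<Rightarrow> ('v \<Rightarrow> 'v \<Rightarrow> nat) \<Rightarrow> ('v \<Rightarrow> int) \<Rightarrow> int" where
  "rank V m D = (if \<not> rank_ge V m D 0 then -1 else int (GREATEST r. rank_ge V m D r))"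

text \<open>Vertex v_{alpha,i} of the banana graph B_{n_0,...,n_g} is represented by the pair
(alpha,i), except that the two multivalent vertices are represented canonically by
(0,0) = v_{0,0} and (0, n 0) = v_{0,n_0}.\<close>

definition bvtx :: "(nat \<Rightarrow> nat) \<Rightarrow> nat \<Rightarrow> nat \<Rightarrow> nat \<times> nat" where
  "bvtx n \<alpha> i = (if i = 0 then (0,0) else if i = n \<alpha> then (0, n 0) else (\<alpha>, i))"

definition banana_V :: "nat \<Rightarrow> (nat \<Rightarrow> nat) \<Rightarrow> (nat \<times> nat) set" where
  "banana_V g n = {bvtx n \<alpha> i | \<alpha> i. \<alpha> \<le> g \<and> i \<le> n \<alpha>}"

definition banana_m :: "nat \<Rightarrow> (nat \<Rightarrow> nat) \<Rightarrow> nat \<times> nat \<Rightarrow> nat \<times> nat \<Rightarrow> nat" where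
  "banana_m g n x y = card {(\<alpha>, i). \<alpha> \<le> g \<and> i < n \<alpha> \<and>
      ((bvtx n \<alpha> i = x \<and> bvtx n \<alpha> (Suc i) = y) \<or> (bvtx n \<alpha> i = y \<and> bvtx n \<alpha> (Suc i) = x))}"

end

theory Submission
  imports Defs
begin

text \<open>Call the two multivalent vertices \<open>v\<^sub>N = v\<^sub>0\<^sub>0\<close> and \<open>v\<^sub>S = v\<^sub>0\<^sub>n\<^sub>0\<close>. The divisors in question
have the normal form \<open>m v\<^sub>N + c v\<^sub>S + E\<close>, where \<open>E\<close> has at most one chip on the interior of each
strand and \<open>0 \<le> c \<le> g - deg E\<close>. Up to linear equivalence this normal form survives the removal of
any single chip: on one strand two chips can be moved to any two positions with the same sum, so a
chip taken from the interior of a strand is paid for by a pole; when \<open>v\<^sub>S\<close> goes into debt, firing the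
region between \<open>v\<^sub>N\<close> and the strand chips pushes all of them towards \<open>v\<^sub>S\<close> until one arrives there.
Keeping track of what each pole loses gives the lower bound for the rank. For the upper bound,
removing \<open>u\<close> chips from \<open>v\<^sub>N\<close> and \<open>w\<close> from \<open>v\<^sub>S\<close> leaves a normal form with a negative pole, and
Dhar's burning algorithm started there burns the whole graph: a chip-free strand carries the fire to
the other pole, which holds fewer chips than there are chip-free strands.\<close>

section \<open>Chip-firing on a finite multigraph\<close>

definition laplacian :: "'v set \<Rightarrow> ('v \<Rightarrow> 'v \<Rightarrow> nat) \<Rightarrow> ('v \<Rightarrow> int) \<Rightarrow> 'v \<Rightarrow> int" where
  "laplacian V m f x = (\<Sum>y\<in>V. int (m x y) * (f x - f y))"

definition unit_div :: "'v \<Rightarrow> 'v \<Rightarrow> int" where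
  "unit_div v y = (if y = v then 1 else 0)"

definition cut_deg :: "'v set \<Rightarrow> ('v \<Rightarrow> 'v \<Rightarrow> nat) \<Rightarrow> 'v set \<Rightarrow> 'v \<Rightarrow> int" where
  "cut_deg V m A x = (\<Sum>y\<in>V - A. int (m x y))"

lemma lin_equiv_iff_laplacian:
  "lin_equiv V m D D' \<longleftrightarrow> (\<exists>f. \<forall>x\<in>V. D' x = D x - laplacian V m f x)"
  unfolding lin_equiv_def laplacian_def ..

lemma laplacian_add: "laplacian V m (\<lambda>y. f y + f' y) x = laplacian V m f x + laplacian V m f' x"
  unfolding laplacian_def by (simp add: sum.distrib[symmetric] algebra_simps)

lemma lin_equiv_refl: "lin_equiv V m D D"
  unfolding lin_equiv_iff_laplacian by (rule exI[of _ "\<lambda>_. 0"]) (simp add: laplacian_def)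

lemma lin_equiv_add:
  assumes "lin_equiv V m D1 D1'" and "lin_equiv V m D2 D2'"
  shows "lin_equiv V m (\<lambda>x. D1 x + D2 x) (\<lambda>x. D1' x + D2' x)"
proof -
  obtain f1 f2 where "\<forall>x\<in>V. D1' x = D1 x - laplacian V m f1 x" "\<forall>x\<in>V. D2' x = D2 x - laplacian V m f2 x"
    using assms unfolding lin_equiv_iff_laplacian by blast
  then have "\<forall>x\<in>V. D1' x + D2' x = (D1 x + D2 x) - laplacian V m (\<lambda>y. f1 y + f2 y) x"
    by (simp add: laplacian_add)
  then show ?thesis unfolding lin_equiv_iff_laplacian by blast
qed

lemma lin_equiv_trans:
  assumes "lin_equiv V m D1 D2" and "lin_equiv V m D2 D3"
  shows "lin_equiv V m D1 D3"
proof -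
  obtain f1 f2 where "\<forall>x\<in>V. D2 x = D1 x - laplacian V m f1 x" "\<forall>x\<in>V. D3 x = D2 x - laplacian V m f2 x"
    using assms unfolding lin_equiv_iff_laplacian by blast
  then have "\<forall>x\<in>V. D3 x = D1 x - laplacian V m (\<lambda>y. f1 y + f2 y) x"
    by (simp add: laplacian_add)
  then show ?thesis unfolding lin_equiv_iff_laplacian by blast
qed

lemma lin_equiv_cong:
  "lin_equiv V m D D' \<Longrightarrow> (\<And>x. x \<in> V \<Longrightarrow> D2 x = D x) \<Longrightarrow> (\<And>x. x \<in> V \<Longrightarrow> D2' x = D' x)
    \<Longrightarrow> lin_equiv V m D2 D2'"
  unfolding lin_equiv_iff_laplacian by metis

lemma lin_equiv_eqI: "(\<And>x. x \<in> V \<Longrightarrow> D' x = D x) \<Longrightarrow> lin_equiv V m D D'"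
  using lin_equiv_cong[OF lin_equiv_refl] by metis

lemma sum_laplacian_eq_0:
  assumes "finite V" and "\<And>x y. m x y = m y x"
  shows "(\<Sum>x\<in>V. laplacian V m f x) = 0"
proof -
  have "(\<Sum>x\<in>V. \<Sum>y\<in>V. int (m x y) * f y) = (\<Sum>y\<in>V. \<Sum>x\<in>V. int (m x y) * f y)"
    by (rule sum.swap)
  also have "\<dots> = (\<Sum>x\<in>V. \<Sum>y\<in>V. int (m x y) * f x)"
    by (simp add: assms(2))
  finally show ?thesis
    unfolding laplacian_def by (simp add: sum_subtractf right_diff_distrib)
qed

lemma deg_lin_equiv:
  assumes "finite V" and "\<And>x y. m x y = m y x" and "lin_equiv V m D D'"
  shows "deg V D' = deg V D"
proof -
  obtain f where f: "\<forall>x\<in>V. D' x = D x - laplacian V m f x"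
    using assms(3) unfolding lin_equiv_iff_laplacian by blast
  have "(\<Sum>x\<in>V. D' x) = (\<Sum>x\<in>V. D x) - (\<Sum>x\<in>V. laplacian V m f x)"
    using f by (simp add: sum_subtractf)
  then show ?thesis
    unfolding deg_def using sum_laplacian_eq_0[OF assms(1,2)] by simp
qed

lemma deg_diff: "deg V (\<lambda>x. D x - D' x) = deg V D - deg V D'"
  by (simp add: deg_def sum_subtractf)

lemma deg_unit_div: "finite V \<Longrightarrow> v \<in> V \<Longrightarrow> deg V (unit_div v) = 1"
  by (simp add: deg_def unit_div_def)

lemma effective_deg_0_vanishes:
  "finite V \<Longrightarrow> effective V E \<Longrightarrow> deg V E = 0 \<Longrightarrow> x \<in> V \<Longrightarrow> E x = 0"
  unfolding effective_def deg_def using sum_nonneg_eq_0_iff by blast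

lemma effective_deg_pos_obtains:
  assumes "effective V E" and "deg V E > 0"
  obtains x where "x \<in> V" "E x > 0"
proof -
  have "\<not> (\<forall>x\<in>V. E x = 0)"
    using assms(2) unfolding deg_def by (metis less_irrefl sum.neutral)
  then show ?thesis
    using assms(1) that unfolding effective_def by force
qed

lemma lin_equiv_subtract_effective:
  assumes fin: "finite V" and P0: "P 0 D"
    and step: "\<And>t D x. P t D \<Longrightarrow> x \<in> V \<Longrightarrow> \<exists>D'. P (Suc t) D' \<and> lin_equiv V m (\<lambda>y. D y - unit_div x y) D'"
    and E: "effective V E" "deg V E = int t"
  shows "\<exists>D'. P t D' \<and> lin_equiv V m (\<lambda>y. D y - E y) D'"
  using E
proof (induction t arbitrary: E)
  case 0
  have "lin_equiv V m (\<lambda>y. D y - E y) D"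
    by (rule lin_equiv_eqI) (use effective_deg_0_vanishes[OF fin 0(1)] 0(2) in simp)
  then show ?case using P0 by blast
next
  case (Suc t)
  obtain x where x: "x \<in> V" "E x > 0"
    using effective_deg_pos_obtains[OF Suc.prems(1)] Suc.prems(2) by auto
  define E' where "E' y = E y - unit_div x y" for y
  have "effective V E'"
    using Suc.prems(1) x by (auto simp: effective_def E'_def unit_div_def)
  moreover have "deg V E' = int t"
    using Suc.prems(2) deg_diff[of V E "unit_div x"] deg_unit_div[OF fin x(1)]
    unfolding E'_def by simp
  ultimately obtain D1 where D1: "P t D1" "lin_equiv V m (\<lambda>y. D y - E' y) D1"
    using Suc.IH by blast
  obtain D2 where D2: "P (Suc t) D2" "lin_equiv V m (\<lambda>y. D1 y - unit_div x y) D2"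
    using step[OF D1(1) x(1)] by blast
  have "lin_equiv V m (\<lambda>y. D y - E y) (\<lambda>y. D1 y - unit_div x y)"
    using lin_equiv_add[OF D1(2) lin_equiv_refl[of V m "\<lambda>y. - unit_div x y"]]
    by (simp add: E'_def)
  then show ?case using D2 lin_equiv_trans by blast
qed

text \<open>Dhar's burning criterion; the proof applies the hypothesis to the set where the firing script
is maximal.\<close>

lemma dhar_burning_not_effective:
  assumes fin: "finite V" and q: "q \<in> V" "D q < 0"
    and burns: "\<And>A. A \<subseteq> V - {q} \<Longrightarrow> A \<noteq> {} \<Longrightarrow> \<exists>x\<in>A. D x < cut_deg V m A x"
    and equiv: "lin_equiv V m D D'"
  shows "\<not> effective V D'"
proof
  assume eff: "effective V D'"
  obtain f where f: "\<forall>x\<in>V. D' x = D x - laplacian V m f x"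
    using equiv unfolding lin_equiv_iff_laplacian by blast
  define A where "A = {x\<in>V. f x = Max (f ` V)}"
  have f_le: "f y \<le> Max (f ` V)" if "y \<in> V" for y
    using fin that by simp
  have "Max (f ` V) \<in> f ` V"
    using fin q by (intro Max_in) auto
  then have A: "A \<noteq> {}" "A \<subseteq> V"
    unfolding A_def by auto
  have D'_le: "D' x \<le> D x - cut_deg V m A x" if "x \<in> A" for x
  proof -
    have xV: "x \<in> V" and fx: "f x = Max (f ` V)"
      using that by (auto simp: A_def)
    have "cut_deg V m A x \<le> (\<Sum>y\<in>V - A. int (m x y) * (f x - f y))"
      unfolding cut_deg_def
    proof (rule sum_mono)
      fix y assume "y \<in> V - A"
      then have "1 \<le> f x - f y"
        using f_le fx by (force simp: A_def)
      then show "int (m x y) \<le> int (m x y) * (f x - f y)"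
        using mult_left_mono[of 1 "f x - f y" "int (m x y)"] by simp
    qed
    also have "\<dots> \<le> laplacian V m f x"
      unfolding laplacian_def
      by (rule sum_mono2[OF fin]) (use f_le fx in auto)
    finally show ?thesis
      using f xV by simp
  qed
  show False
  proof (cases "q \<in> A")
    case True
    have "0 \<le> cut_deg V m A q"
      unfolding cut_deg_def by (simp add: sum_nonneg)
    then show False
      using D'_le[OF True] q eff unfolding effective_def by force
  next
    case False
    then obtain x where "x \<in> A" "D x < cut_deg V m A x"
      using burns[of A] A by blast
    then show False
      using D'_le A eff unfolding effective_def by force
  qed
qed

lemma rank_eqI:
  assumes "0 \<le> \<rho>" and "\<And>r. rank_ge V m D r \<longleftrightarrow> int r \<le> \<rho>"
  shows "rank V m D = \<rho>"
proof -
  have rank_ge_eq: "rank_ge V m D = (\<lambda>r. int r \<le> \<rho>)"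
    using assms(2) by blast
  have "(GREATEST r. int r \<le> \<rho>) = nat \<rho>"
    by (rule Greatest_equality) (use assms(1) in auto)
  then show ?thesis
    unfolding rank_def rank_ge_eq using assms(1) by simp
qed

lemma if_disj_eq_add:
  "\<not> (P \<and> Q) \<Longrightarrow> (if P \<or> Q then a else 0) = (if P then a else 0) + (if Q then a else (0::'a::comm_monoid_add))"
  by auto

lemma sum_edge_multiplicity:
  fixes s t :: "'e \<Rightarrow> 'v"
  assumes fin: "finite Ed" "finite V" and ends: "\<And>e. e \<in> Ed \<Longrightarrow> s e \<in> V \<and> t e \<in> V \<and> s e \<noteq> t e"
  shows "(\<Sum>y\<in>V. int (card {e\<in>Ed. (s e = x \<and> t e = y) \<or> (s e = y \<and> t e = x)}) * w y)
       = (\<Sum>e\<in>Ed. (if s e = x then w (t e) else 0) + (if t e = x then w (s e) else 0))"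
proof -
  have term_eq: "int (card {e\<in>Ed. (s e = x \<and> t e = y) \<or> (s e = y \<and> t e = x)}) * w y
      = (\<Sum>e\<in>Ed. (if s e = x \<and> t e = y then w y else 0) + (if s e = y \<and> t e = x then w y else 0))"
    for y
  proof -
    have "int (card {e\<in>Ed. (s e = x \<and> t e = y) \<or> (s e = y \<and> t e = x)}) * w y
        = (\<Sum>e\<in>Ed. if (s e = x \<and> t e = y) \<or> (s e = y \<and> t e = x) then w y else 0)"
      using fin(1) by (simp add: sum.If_cases Int_def)
    also have "\<dots> = (\<Sum>e\<in>Ed. (if s e = x \<and> t e = y then w y else 0) + (if s e = y \<and> t e = x then w y else 0))"
    proof (rule sum.cong[OF refl])
      fix e assume "e \<in> Ed"
      then have "s e \<noteq> t e" using ends by blast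
      then show "(if (s e = x \<and> t e = y) \<or> (s e = y \<and> t e = x) then w y else 0)
          = (if s e = x \<and> t e = y then w y else 0) + (if s e = y \<and> t e = x then w y else 0)"
        by (intro if_disj_eq_add) metis
    qed
    finally show ?thesis .
  qed
  have "(\<Sum>y\<in>V. int (card {e\<in>Ed. (s e = x \<and> t e = y) \<or> (s e = y \<and> t e = x)}) * w y)
      = (\<Sum>y\<in>V. \<Sum>e\<in>Ed. (if s e = x \<and> t e = y then w y else 0) + (if s e = y \<and> t e = x then w y else 0))"
    by (rule sum.cong[OF refl term_eq])
  also have "\<dots> = (\<Sum>e\<in>Ed. \<Sum>y\<in>V. (if s e = x \<and> t e = y then w y else 0) + (if s e = y \<and> t e = x then w y else 0))"
    by (rule sum.swap)
  also have "\<dots> = (\<Sum>e\<in>Ed. (if s e = x then w (t e) else 0) + (if t e = x then w (s e) else 0))"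
  proof (rule sum.cong[OF refl])
    fix e assume "e \<in> Ed"
    then have "s e \<in> V" "t e \<in> V" using ends by auto
    have "(\<Sum>y\<in>V. (if s e = x \<and> t e = y then w y else 0) + (if s e = y \<and> t e = x then w y else 0))
        = (if s e = x then (\<Sum>y\<in>V. if t e = y then w y else 0) else 0)
          + (if t e = x then (\<Sum>y\<in>V. if s e = y then w y else 0) else 0)"
      by (simp add: sum.distrib)
    then show "(\<Sum>y\<in>V. (if s e = x \<and> t e = y then w y else 0) + (if s e = y \<and> t e = x then w y else 0))
        = (if s e = x then w (t e) else 0) + (if t e = x then w (s e) else 0)"
      using fin(2) \<open>s e \<in> V\<close> \<open>t e \<in> V\<close> by simp
  qed
  finally show ?thesis .
qed

section \<open>Banana graphs\<close>

locale banana =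
  fixes g :: nat and n :: "nat \<Rightarrow> nat"
  assumes strand_pos: "\<And>\<alpha>. \<alpha> \<le> g \<Longrightarrow> 1 \<le> n \<alpha>"
begin

abbreviation "V \<equiv> banana_V g n"
abbreviation "M \<equiv> banana_m g n"
abbreviation "bv \<equiv> bvtx n"
abbreviation "vN \<equiv> (0::nat, 0::nat)"
abbreviation "vS \<equiv> (0::nat, n 0)"

lemma poles_distinct: "vN \<noteq> vS"
  using strand_pos[of 0] by auto

lemma bv_0 [simp]: "bv \<alpha> 0 = vN"
  by (simp add: bvtx_def)

lemma bv_end: "\<alpha> \<le> g \<Longrightarrow> bv \<alpha> (n \<alpha>) = vS"
  using strand_pos[of \<alpha>] by (auto simp: bvtx_def)

lemma bv_interior: "0 < i \<Longrightarrow> i < n \<alpha> \<Longrightarrow> bv \<alpha> i = (\<alpha>, i)"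
  by (simp add: bvtx_def)

lemma bv_in_V: "\<alpha> \<le> g \<Longrightarrow> i \<le> n \<alpha> \<Longrightarrow> bv \<alpha> i \<in> V"
  by (auto simp: banana_V_def)

lemma poles_in_V: "vN \<in> V" "vS \<in> V"
  using bv_in_V[of 0 0] bv_in_V[of 0 "n 0"] bv_end[of 0] by auto

lemma interior_in_V: "\<alpha> \<le> g \<Longrightarrow> 0 < i \<Longrightarrow> i < n \<alpha> \<Longrightarrow> (\<alpha>, i) \<in> V"
  using bv_in_V[of \<alpha> i] bv_interior[of i \<alpha>] by simp

lemma V_cases:
  assumes "x \<in> V"
  obtains "x = vN" | "x = vS" | \<alpha> i where "x = (\<alpha>, i)" "\<alpha> \<le> g" "0 < i" "i < n \<alpha>"
proof -
  have "x = vN \<or> x = vS \<or> (\<exists>\<alpha> i. x = (\<alpha>, i) \<and> \<alpha> \<le> g \<and> 0 < i \<and> i < n \<alpha>)"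
    using assms by (auto simp: banana_V_def bvtx_def)
  then show ?thesis
    using that by blast
qed

lemma finite_V: "finite V"
proof -
  have "V \<subseteq> (\<lambda>(\<alpha>, i). bv \<alpha> i) ` Sigma {..g} (\<lambda>\<alpha>. {..n \<alpha>})"
    by (auto simp: banana_V_def)
  then show ?thesis
    by (rule finite_subset) auto
qed

lemma bv_eq_interior:
  "\<beta> \<le> g \<Longrightarrow> i \<le> n \<beta> \<Longrightarrow> 0 < p \<Longrightarrow> p < n \<alpha> \<Longrightarrow> bv \<beta> i = (\<alpha>, p) \<longleftrightarrow> \<beta> = \<alpha> \<and> i = p"
  by (auto simp: bvtx_def)

lemma bv_eq_vN: "\<beta> \<le> g \<Longrightarrow> i \<le> n \<beta> \<Longrightarrow> bv \<beta> i = vN \<longleftrightarrow> i = 0"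
  using strand_pos[of 0] by (auto simp: bvtx_def)

lemma bv_eq_vS: "\<beta> \<le> g \<Longrightarrow> i \<le> n \<beta> \<Longrightarrow> bv \<beta> i = vS \<longleftrightarrow> i = n \<beta>"
  using strand_pos[of \<beta>] strand_pos[of 0] by (auto simp: bvtx_def)

abbreviation "edges \<equiv> Sigma {..g} (\<lambda>\<alpha>. {..<n \<alpha>})"

lemma sum_M:
  "(\<Sum>y\<in>V. int (M x y) * w y) = (\<Sum>\<beta>\<le>g. \<Sum>i<n \<beta>.
      (if bv \<beta> i = x then w (bv \<beta> (Suc i)) else 0) + (if bv \<beta> (Suc i) = x then w (bv \<beta> i) else 0))"
proof -
  have M_eq: "M x y = card {e \<in> edges. (bv (fst e) (snd e) = x \<and> bv (fst e) (Suc (snd e)) = y)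
      \<or> (bv (fst e) (snd e) = y \<and> bv (fst e) (Suc (snd e)) = x)}" for y
    unfolding banana_m_def by (rule arg_cong[where f = card]) auto
  have "\<alpha> \<le> g \<Longrightarrow> i < n \<alpha> \<Longrightarrow> bv \<alpha> i \<noteq> bv \<alpha> (Suc i)" for \<alpha> i
    using strand_pos[of 0] by (auto simp: bvtx_def)
  then show ?thesis
    unfolding M_eq
    by (subst sum_edge_multiplicity[OF _ finite_V]) (auto simp: sum.Sigma split_def intro: bv_in_V)
qed

lemma sum_M_interior:
  assumes "\<alpha> \<le> g" "0 < p" "p < n \<alpha>"
  shows "(\<Sum>y\<in>V. int (M (\<alpha>, p) y) * w y) = w (bv \<alpha> (p - 1)) + w (bv \<alpha> (Suc p))"
proof -
  have "(\<Sum>y\<in>V. int (M (\<alpha>, p) y) * w y) = (\<Sum>\<beta>\<le>g. if \<beta> = \<alpha> then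
      (\<Sum>i<n \<alpha>. (if i = p then w (bv \<alpha> (Suc p)) else 0) + (if i = p - 1 then w (bv \<alpha> (p - 1)) else 0)) else 0)"
    unfolding sum_M
  proof (intro sum.cong refl)
    fix \<beta> assume "\<beta> \<in> {..g}"
    then have "(if bv \<beta> i = (\<alpha>, p) then w (bv \<beta> (Suc i)) else 0) + (if bv \<beta> (Suc i) = (\<alpha>, p) then w (bv \<beta> i) else 0)
      = (if \<beta> = \<alpha> then (if i = p then w (bv \<alpha> (Suc p)) else 0) + (if i = p - 1 then w (bv \<alpha> (p - 1)) else 0) else 0)"
      if "i < n \<beta>" for i
      using bv_eq_interior[of \<beta> i p \<alpha>] bv_eq_interior[of \<beta> "Suc i" p \<alpha>] that assms by auto
    then show "(\<Sum>i<n \<beta>. (if bv \<beta> i = (\<alpha>, p) then w (bv \<beta> (Suc i)) else 0)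
        + (if bv \<beta> (Suc i) = (\<alpha>, p) then w (bv \<beta> i) else 0))
      = (if \<beta> = \<alpha> then (\<Sum>i<n \<alpha>. (if i = p then w (bv \<alpha> (Suc p)) else 0)
        + (if i = p - 1 then w (bv \<alpha> (p - 1)) else 0)) else 0)"
      by (auto intro: sum.neutral)
  qed
  also have "\<dots> = w (bv \<alpha> (p - 1)) + w (bv \<alpha> (Suc p))"
    using assms less_imp_diff_less[of p "n \<alpha>" 1] by (simp add: sum.distrib)
  finally show ?thesis .
qed

lemma sum_M_vN: "(\<Sum>y\<in>V. int (M vN y) * w y) = (\<Sum>\<beta>\<le>g. w (bv \<beta> 1))"
  unfolding sum_M
proof (intro sum.cong refl)
  fix \<beta> assume "\<beta> \<in> {..g}"
  then have "1 \<le> n \<beta>" "\<And>i. i < n \<beta> \<Longrightarrow> bv \<beta> i = vN \<longleftrightarrow> i = 0" "\<And>i. i < n \<beta> \<Longrightarrow> bv \<beta> (Suc i) \<noteq> vN"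
    using strand_pos bv_eq_vN[of \<beta>] by auto
  then show "(\<Sum>i<n \<beta>. (if bv \<beta> i = vN then w (bv \<beta> (Suc i)) else 0)
      + (if bv \<beta> (Suc i) = vN then w (bv \<beta> i) else 0)) = w (bv \<beta> 1)"
    by (simp add: Suc_le_eq cong: if_cong)
qed

lemma sum_M_vS: "(\<Sum>y\<in>V. int (M vS y) * w y) = (\<Sum>\<beta>\<le>g. w (bv \<beta> (n \<beta> - 1)))"
  unfolding sum_M
proof (intro sum.cong refl)
  fix \<beta> assume "\<beta> \<in> {..g}"
  then have "1 \<le> n \<beta>" "\<And>i. i < n \<beta> \<Longrightarrow> bv \<beta> (Suc i) = vS \<longleftrightarrow> i = n \<beta> - 1" "\<And>i. i < n \<beta> \<Longrightarrow> bv \<beta> i \<noteq> vS"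
    using strand_pos bv_eq_vS[of \<beta>] by auto
  then show "(\<Sum>i<n \<beta>. (if bv \<beta> i = vS then w (bv \<beta> (Suc i)) else 0)
      + (if bv \<beta> (Suc i) = vS then w (bv \<beta> i) else 0)) = w (bv \<beta> (n \<beta> - 1))"
    by (simp cong: if_cong)
qed

lemma M_sym: "M x y = M y x"
  unfolding banana_m_def by (rule arg_cong[where f = card]) auto

lemma laplacian_interior:
  "\<alpha> \<le> g \<Longrightarrow> 0 < p \<Longrightarrow> p < n \<alpha> \<Longrightarrow>
    laplacian V M f (\<alpha>, p) = 2 * f (bv \<alpha> p) - f (bv \<alpha> (p - 1)) - f (bv \<alpha> (Suc p))"
  unfolding laplacian_def using sum_M_interior[of \<alpha> p "\<lambda>y. f (\<alpha>, p) - f y"] bv_interior[of p \<alpha>] by simp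

lemma laplacian_vN: "laplacian V M f vN = (\<Sum>\<beta>\<le>g. f vN - f (bv \<beta> 1))"
  unfolding laplacian_def using sum_M_vN[of "\<lambda>y. f vN - f y"] by simp

lemma laplacian_vS: "laplacian V M f vS = (\<Sum>\<beta>\<le>g. f vS - f (bv \<beta> (n \<beta> - 1)))"
  unfolding laplacian_def using sum_M_vS[of "\<lambda>y. f vS - f y"] by simp

lemma deg_lin_equiv_banana: "lin_equiv V M D D' \<Longrightarrow> deg V D' = deg V D"
  using deg_lin_equiv[OF finite_V M_sym] .

section \<open>Normal forms\<close>

text \<open>\<open>J \<beta>\<close> is the position of the single chip on the interior of strand \<open>\<beta>\<close>, with \<open>J \<beta> = 0\<close> meaning
that the strand carries no chip.\<close>

definition strand_chips :: "(nat \<Rightarrow> nat) \<Rightarrow> nat \<times> nat \<Rightarrow> int" where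
  "strand_chips J y = (if fst y \<le> g \<and> 0 < snd y \<and> J (fst y) = snd y then 1 else 0)"

definition normal_div :: "int \<Rightarrow> int \<Rightarrow> (nat \<Rightarrow> nat) \<Rightarrow> nat \<times> nat \<Rightarrow> int" where
  "normal_div m c J y = (if y = vN then m else 0) + (if y = vS then c else 0) + strand_chips J y"

definition chip_positions :: "(nat \<Rightarrow> nat) \<Rightarrow> bool" where
  "chip_positions J \<longleftrightarrow> (\<forall>\<beta>\<le>g. J \<beta> < n \<beta>)"

definition occupied :: "(nat \<Rightarrow> nat) \<Rightarrow> nat" where
  "occupied J = card {\<beta>\<in>{..g}. 0 < J \<beta>}"

definition admissible :: "(nat \<Rightarrow> nat) \<Rightarrow> int \<Rightarrow> bool" where
  "admissible J c \<longleftrightarrow> chip_positions J \<and> 0 \<le> c \<and> c + int (occupied J) \<le> int g"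

lemma strand_chips_interior: "\<alpha> \<le> g \<Longrightarrow> 0 < p \<Longrightarrow> strand_chips J (\<alpha>, p) = (if J \<alpha> = p then 1 else 0)"
  by (simp add: strand_chips_def)

lemma normal_div_vN: "normal_div m c J vN = m"
  using poles_distinct by (simp add: normal_div_def strand_chips_def)

lemma normal_div_vS: "chip_positions J \<Longrightarrow> normal_div m c J vS = c"
  using poles_distinct by (auto simp: normal_div_def strand_chips_def chip_positions_def)

lemma normal_div_interior:
  "\<alpha> \<le> g \<Longrightarrow> 0 < p \<Longrightarrow> p < n \<alpha> \<Longrightarrow> normal_div m c J (\<alpha>, p) = (if J \<alpha> = p then 1 else 0)"
  by (auto simp: normal_div_def strand_chips_interior)

lemma normal_div_move_vN: "normal_div m c J y = normal_div (m - 1) c J y + unit_div vN y"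
  by (simp add: normal_div_def unit_div_def)

lemma normal_div_move_vS: "normal_div m c J y = normal_div m (c - 1) J y + unit_div vS y"
  by (simp add: normal_div_def unit_div_def)

lemma normal_div_move_strand:
  "\<alpha> \<le> g \<Longrightarrow> 0 < J \<alpha> \<Longrightarrow> normal_div m c J y = normal_div m c (J(\<alpha> := 0)) y + unit_div (\<alpha>, J \<alpha>) y"
  by (cases y) (auto simp: normal_div_def unit_div_def strand_chips_def)

lemma effective_normal_div: "0 \<le> m \<Longrightarrow> 0 \<le> c \<Longrightarrow> effective V (normal_div m c J)"
  by (simp add: effective_def normal_div_def strand_chips_def)

lemma deg_strand_chips:
  assumes "chip_positions J"
  shows "deg V (strand_chips J) = int (occupied J)"
proof -
  have "{x\<in>V. fst x \<le> g \<and> 0 < snd x \<and> J (fst x) = snd x} = (\<lambda>\<beta>. (\<beta>, J \<beta>)) ` {\<beta>\<in>{..g}. 0 < J \<beta>}"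
    using assms interior_in_V by (auto simp: chip_positions_def image_iff)
  moreover have "inj_on (\<lambda>\<beta>. (\<beta>, J \<beta>)) {\<beta>\<in>{..g}. 0 < J \<beta>}"
    by (rule inj_onI) auto
  ultimately show ?thesis
    unfolding deg_def strand_chips_def occupied_def using finite_V
    by (simp add: sum.If_cases Int_def card_image)
qed

lemma deg_normal_div: "chip_positions J \<Longrightarrow> deg V (normal_div m c J) = m + c + int (occupied J)"
  using deg_strand_chips[of J] finite_V poles_in_V unfolding deg_def normal_div_def
  by (simp add: sum.distrib)

lemma sum_free_strands: "(\<Sum>\<beta>\<le>g. if J \<beta> = 0 then 1 else 0) = int g + 1 - int (occupied J)"
proof -
  have "card {\<beta>\<in>{..g}. J \<beta> = 0} + occupied J = card ({\<beta>\<in>{..g}. J \<beta> = 0} \<union> {\<beta>\<in>{..g}. 0 < J \<beta>})"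
    unfolding occupied_def by (rule card_Un_disjoint[symmetric]) auto
  also have "{\<beta>\<in>{..g}. J \<beta> = 0} \<union> {\<beta>\<in>{..g}. 0 < J \<beta>} = {..g}"
    by auto
  finally have "int (card {\<beta>\<in>{..g}. J \<beta> = 0}) = int g + 1 - int (occupied J)"
    by simp
  moreover have "int (card {\<beta>\<in>{..g}. J \<beta> = 0}) = (\<Sum>\<beta>\<le>g. if J \<beta> = 0 then 1 else 0)"
    by (simp add: sum.If_cases Int_def)
  ultimately show ?thesis
    by simp
qed

definition strand_fun :: "nat \<Rightarrow> (nat \<Rightarrow> int) \<Rightarrow> nat \<times> nat \<Rightarrow> int" where
  "strand_fun \<alpha> h y = (if fst y = \<alpha> \<and> 0 < snd y \<and> snd y < n \<alpha> then h (snd y) else 0)"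

lemma strand_fun_bv:
  assumes "h 0 = 0" "h (n \<alpha>) = 0" "\<beta> \<le> g" "r \<le> n \<beta>"
  shows "strand_fun \<alpha> h (bv \<beta> r) = (if \<beta> = \<alpha> then h r else 0)"
  using assms bv_end[of \<beta>] strand_pos[of \<beta>] by (auto simp: strand_fun_def bvtx_def)

lemma laplacian_strand_fun:
  assumes "\<alpha> \<le> g" "h 0 = 0" "h (n \<alpha>) = 0"
  shows "laplacian V M (strand_fun \<alpha> h) vN = - h 1"
    and "laplacian V M (strand_fun \<alpha> h) vS = - h (n \<alpha> - 1)"
    and "\<beta> \<le> g \<Longrightarrow> 0 < r \<Longrightarrow> r < n \<beta> \<Longrightarrow>
      laplacian V M (strand_fun \<alpha> h) (\<beta>, r) = (if \<beta> = \<alpha> then 2 * h r - h (r - 1) - h (Suc r) else 0)"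
proof -
  have "laplacian V M (strand_fun \<alpha> h) vN = (\<Sum>\<beta>\<le>g. if \<beta> = \<alpha> then - h 1 else 0)"
    unfolding laplacian_vN using strand_fun_bv[OF assms(2,3)] strand_pos
    by (intro sum.cong refl) (auto simp: strand_fun_def)
  then show "laplacian V M (strand_fun \<alpha> h) vN = - h 1"
    using assms(1) by simp
  have "laplacian V M (strand_fun \<alpha> h) vS = (\<Sum>\<beta>\<le>g. if \<beta> = \<alpha> then - h (n \<alpha> - 1) else 0)"
    unfolding laplacian_vS using strand_fun_bv[OF assms(2,3)] strand_pos poles_distinct
    by (intro sum.cong refl) (auto simp: strand_fun_def)
  then show "laplacian V M (strand_fun \<alpha> h) vS = - h (n \<alpha> - 1)"
    using assms(1) by simp
  show "laplacian V M (strand_fun \<alpha> h) (\<beta>, r) = (if \<beta> = \<alpha> then 2 * h r - h (r - 1) - h (Suc r) else 0)"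
    if "\<beta> \<le> g" "0 < r" "r < n \<beta>"
    using that laplacian_interior strand_fun_bv[OF assms(2,3)] by simp
qed

text \<open>The
firing script is the piecewise linear function of the strand coordinate whose second differences are
the differences of the chip counts; it vanishes at both poles because \<open>p + q = p' + q'\<close>.\<close>

lemma lin_equiv_strand_pair:
  assumes a: "\<alpha> \<le> g" "p + q = p' + q'" "p \<le> n \<alpha>" "q \<le> n \<alpha>" "p' \<le> n \<alpha>" "q' \<le> n \<alpha>"
  shows "lin_equiv V M (\<lambda>x. unit_div (bv \<alpha> p) x + unit_div (bv \<alpha> q) x)
           (\<lambda>x. unit_div (bv \<alpha> p') x + unit_div (bv \<alpha> q') x)"
proof -
  define H where "H r = int (min r p) + int (min r q) - int (min r p') - int (min r q')" for r
  have H: "H 0 = 0" "H (n \<alpha>) = 0"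
    using a by (auto simp: H_def min_def)
  have "unit_div (bv \<alpha> p') x + unit_div (bv \<alpha> q') x
      = (unit_div (bv \<alpha> p) x + unit_div (bv \<alpha> q) x) - laplacian V M (strand_fun \<alpha> H) x"
    if "x \<in> V" for x
    using that
  proof (cases rule: V_cases)
    case 1
    have "unit_div (bv \<alpha> s) vN = (if s = 0 then 1 else 0)" if "s \<le> n \<alpha>" for s
      using bv_eq_vN[of \<alpha> s] a that by (auto simp: unit_div_def)
    moreover have "int (min 1 s) = (if s = 0 then 0 else 1)" for s
      by (auto simp: min_def)
    ultimately show ?thesis
      unfolding 1 laplacian_strand_fun(1)[OF a(1) H] using a by (simp add: H_def)
  next
    case 2
    have "unit_div (bv \<alpha> s) vS = (if s = n \<alpha> then 1 else 0)" if "s \<le> n \<alpha>" for s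
      using bv_eq_vS[of \<alpha> s] a that by (auto simp: unit_div_def)
    moreover have "int (min (n \<alpha> - 1) s) = int s - (if s = n \<alpha> then 1 else 0)" if "s \<le> n \<alpha>" for s
      using that strand_pos[of \<alpha>] a by (auto simp: min_def)
    ultimately show ?thesis
      unfolding 2 laplacian_strand_fun(2)[OF a(1) H] using a by (simp add: H_def)
  next
    case (3 \<beta> r)
    have "unit_div (bv \<alpha> s) x = (if \<alpha> = \<beta> \<and> s = r then 1 else 0)" if "s \<le> n \<alpha>" for s
      using bv_eq_interior[of \<alpha> s r \<beta>] 3 a that by (auto simp: unit_div_def)
    moreover have second_diff:
      "2 * int (min r s) - int (min (r - 1) s) - int (min (Suc r) s) = (if r = s then 1 else 0)" for s
      using 3 by (auto simp: min_def)
    have "2 * H r - H (r - 1) - H (Suc r)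
        = (2 * int (min r p) - int (min (r - 1) p) - int (min (Suc r) p))
        + (2 * int (min r q) - int (min (r - 1) q) - int (min (Suc r) q))
        - (2 * int (min r p') - int (min (r - 1) p') - int (min (Suc r) p'))
        - (2 * int (min r q') - int (min (r - 1) q') - int (min (Suc r) q'))"
      by (simp add: H_def algebra_simps)
    ultimately show ?thesis
      unfolding 3(1) laplacian_strand_fun(3)[OF a(1) H 3(2-4)] second_diff using 3 a by auto
  qed
  then show ?thesis
    unfolding lin_equiv_iff_laplacian by blast
qed

lemma lin_equiv_strand_pair_add:
  assumes "\<alpha> \<le> g" "p + q = p' + q'" "p \<le> n \<alpha>" "q \<le> n \<alpha>" "p' \<le> n \<alpha>" "q' \<le> n \<alpha>"
    and "\<And>y. D y = R y + unit_div (bv \<alpha> p) y + unit_div (bv \<alpha> q) y"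
    and "\<And>y. D' y = R y + unit_div (bv \<alpha> p') y + unit_div (bv \<alpha> q') y"
  shows "lin_equiv V M D D'"
  using lin_equiv_add[OF lin_equiv_refl[of V M R] lin_equiv_strand_pair[OF assms(1-6)]]
  by (rule lin_equiv_cong) (simp_all add: assms(7,8) add.assoc)

text \<open>Firing \<open>t\<close> times the vertices between \<open>v\<^sub>N\<close> and the strand chips (and tapering off beyond them)
pushes every strand chip \<open>t\<close> steps towards \<open>v\<^sub>S\<close>; a chip that reaches \<open>v\<^sub>S\<close> lands there, and every
chip-free strand takes one chip from \<open>v\<^sub>N\<close>.\<close>

lemma lin_equiv_sweep:
  assumes J: "chip_positions J" and t: "1 \<le> t" and gap: "\<forall>\<beta>\<le>g. t + J \<beta> \<le> n \<beta>"
  shows "lin_equiv V M (normal_div m (-1) J)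
           (normal_div (m - int (card {\<beta>\<in>{..g}. J \<beta> = 0})) (int (card {\<beta>\<in>{..g}. t + J \<beta> = n \<beta>}) - 1)
              (\<lambda>\<beta>. if J \<beta> + t < n \<beta> then J \<beta> + t else 0))"
    (is "lin_equiv V M _ (normal_div ?m ?c ?J)")
proof -
  define f where "f y = (if y = vN then int t else if y = vS then 0 else
      if fst y \<le> g \<and> 0 < snd y \<and> snd y < n (fst y) then int (min t (t + J (fst y) - snd y)) else 0)" for y
  have J': "chip_positions ?J"
    using strand_pos by (force simp: chip_positions_def)
  have f_bv: "f (bv \<beta> r) = int (min t (t + J \<beta> - r))" if "\<beta> \<le> g" "r \<le> n \<beta>" for \<beta> r
    using that gap bv_end[of \<beta>] poles_distinct
    by (cases "r = 0"; cases "r = n \<beta>") (auto simp: f_def bv_interior)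
  have "normal_div ?m ?c ?J x = normal_div m (-1) J x - laplacian V M f x" if "x \<in> V" for x
    using that
  proof (cases rule: V_cases)
    case 1
    have "laplacian V M f vN = (\<Sum>\<beta>\<le>g. if J \<beta> = 0 then 1 else 0)"
      unfolding laplacian_vN
    proof (intro sum.cong refl)
      fix \<beta> assume "\<beta> \<in> {..g}"
      then have "f (bv \<beta> 1) = int (min t (t + J \<beta> - 1))"
        using f_bv strand_pos by simp
      then show "f vN - f (bv \<beta> 1) = (if J \<beta> = 0 then 1 else 0)"
        using t by (auto simp: f_def min_def)
    qed
    then show ?thesis
      using 1 by (simp add: normal_div_vN sum.If_cases Int_def)
  next
    case 2
    have "laplacian V M f vS = - (\<Sum>\<beta>\<le>g. if t + J \<beta> = n \<beta> then 1 else 0)"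
      unfolding laplacian_vS sum_negf[symmetric]
    proof (intro sum.cong refl)
      fix \<beta> assume \<beta>: "\<beta> \<in> {..g}"
      then have "f (bv \<beta> (n \<beta> - 1)) = int (min t (t + J \<beta> - (n \<beta> - 1)))"
        using f_bv by simp
      moreover have "t + J \<beta> \<le> n \<beta>" "1 \<le> n \<beta>"
        using gap strand_pos \<beta> by auto
      ultimately show "f vS - f (bv \<beta> (n \<beta> - 1)) = - (if t + J \<beta> = n \<beta> then 1 else 0)"
        using t poles_distinct by (auto simp: f_def min_def)
    qed
    then show ?thesis
      using 2 J J' by (simp add: normal_div_vS sum.If_cases Int_def)
  next
    case (3 \<beta> r)
    have "laplacian V M f x = 2 * f (bv \<beta> r) - f (bv \<beta> (r - 1)) - f (bv \<beta> (Suc r))"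
      using 3 laplacian_interior by simp
    also have "\<dots> = (if r = J \<beta> then 1 else 0) - (if r = J \<beta> + t then 1 else 0)"
      using 3 t by (simp add: f_bv) (auto simp: min_def)
    finally show ?thesis
      using 3 by (auto simp: normal_div_interior)
  qed
  then show ?thesis
    unfolding lin_equiv_iff_laplacian by blast
qed

text \<open>Taking \<open>t\<close> to be the smallest gap between a strand chip and \<open>v\<^sub>S\<close> repays the debt at
\<open>v\<^sub>S\<close> and restores admissibility.\<close>

lemma lin_equiv_sweep_admissible:
  assumes J: "chip_positions J"
  obtains m' c' J' where "admissible J' c'" "lin_equiv V M (normal_div m (-1) J) (normal_div m' c' J')"
proof -
  define t where "t = Min ((\<lambda>\<beta>. n \<beta> - J \<beta>) ` {..g})"
  have gap: "\<forall>\<beta>\<le>g. t + J \<beta> \<le> n \<beta>"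
    using J unfolding t_def chip_positions_def
    by (metis (no_types, lifting) Min_le atMost_iff finite_atMost finite_imageI image_eqI
        le_add_diff_inverse2 less_imp_le_nat add_le_mono1)
  have "t \<in> (\<lambda>\<beta>. n \<beta> - J \<beta>) ` {..g}"
    unfolding t_def by (rule Min_in) auto
  then obtain \<beta>0 where \<beta>0: "\<beta>0 \<le> g" "t + J \<beta>0 = n \<beta>0"
    using J by (force simp: chip_positions_def)
  have t: "1 \<le> t"
    using \<beta>0 J by (force simp: chip_positions_def)
  define J' where "J' = (\<lambda>\<beta>. if J \<beta> + t < n \<beta> then J \<beta> + t else 0)"
  define r where "r = card {\<beta>\<in>{..g}. t + J \<beta> = n \<beta>}"
  have "1 \<le> r"
    unfolding r_def using \<beta>0 card_mono[of "{\<beta>\<in>{..g}. t + J \<beta> = n \<beta>}" "{\<beta>0}"] by simp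
  have "{\<beta>\<in>{..g}. t + J \<beta> = n \<beta>} \<union> {\<beta>\<in>{..g}. 0 < J' \<beta>} = {..g}"
    using gap t by (auto simp: J'_def order.order_iff_strict)
  moreover have "{\<beta>\<in>{..g}. t + J \<beta> = n \<beta>} \<inter> {\<beta>\<in>{..g}. 0 < J' \<beta>} = {}"
    using gap t by (auto simp: J'_def order.order_iff_strict)
  ultimately have "r + occupied J' = Suc g"
    unfolding r_def occupied_def by (metis card_Un_disjoint card_atMost finite_Un finite_atMost)
  then have "admissible J' (int r - 1)"
    using \<open>1 \<le> r\<close> strand_pos unfolding admissible_def chip_positions_def J'_def by force
  then show ?thesis
    using that lin_equiv_sweep[OF J t gap, of m] unfolding J'_def r_def by blast
qed

section \<open>Removing chips: the lower bound\<close>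

lemma occupied_upd:
  assumes "\<alpha> \<le> g"
  shows "int (occupied (J(\<alpha> := k))) + (if 0 < J \<alpha> then 1 else 0) = int (occupied J) + (if 0 < k then 1 else 0)"
proof -
  have split: "card {\<beta>\<in>{..g}. 0 < K \<beta>} = card {\<beta>\<in>{..g} - {\<alpha>}. 0 < K \<beta>} + (if 0 < K \<alpha> then 1 else 0)"
    for K :: "nat \<Rightarrow> nat"
  proof -
    have "{\<beta>\<in>{..g}. 0 < K \<beta>} = {\<beta>\<in>{..g} - {\<alpha>}. 0 < K \<beta>} \<union> (if 0 < K \<alpha> then {\<alpha>} else {})"
      using assms by auto
    then show ?thesis
      by (simp add: card_Un_disjoint)
  qed
  have "{\<beta>\<in>{..g} - {\<alpha>}. 0 < (J(\<alpha> := k)) \<beta>} = {\<beta>\<in>{..g} - {\<alpha>}. 0 < J \<beta>}"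
    by auto
  then show ?thesis
    unfolding occupied_def using split[of J] split[of "J(\<alpha> := k)"] by simp
qed

lemma lin_equiv_remove_chip_before:
  assumes x: "\<alpha> \<le> g" "0 < i" and j: "i < J \<alpha>" "J \<alpha> < n \<alpha>"
  shows "lin_equiv V M (\<lambda>y. normal_div m c J y - unit_div (\<alpha>, i) y) (normal_div (m - 1) c (J(\<alpha> := J \<alpha> - i)))"
proof (rule lin_equiv_strand_pair_add[of \<alpha> 0 "J \<alpha>" i "J \<alpha> - i" _ "\<lambda>y. normal_div (m - 1) c (J(\<alpha> := 0)) y - unit_div (\<alpha>, i) y"])
  fix y
  show "normal_div m c J y - unit_div (\<alpha>, i) y
      = normal_div (m - 1) c (J(\<alpha> := 0)) y - unit_div (\<alpha>, i) y + unit_div (bv \<alpha> 0) y + unit_div (bv \<alpha> (J \<alpha>)) y"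
    using normal_div_move_vN[of m c J y] normal_div_move_strand[of \<alpha> J "m - 1" c y] x j bv_interior
    by simp
  show "normal_div (m - 1) c (J(\<alpha> := J \<alpha> - i)) y
      = normal_div (m - 1) c (J(\<alpha> := 0)) y - unit_div (\<alpha>, i) y + unit_div (bv \<alpha> i) y + unit_div (bv \<alpha> (J \<alpha> - i)) y"
    using normal_div_move_strand[of \<alpha> "J(\<alpha> := J \<alpha> - i)" "m - 1" c y] x j bv_interior[of i \<alpha>]
      bv_interior[of "J \<alpha> - i" \<alpha>]
    by simp
qed (use x j in auto)

lemma lin_equiv_remove_chip_after:
  assumes x: "\<alpha> \<le> g" "i < n \<alpha>" and j: "0 < J \<alpha>" "J \<alpha> < i"
  shows "lin_equiv V M (\<lambda>y. normal_div m c J y - unit_div (\<alpha>, i) y)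
           (normal_div m (c - 1) (J(\<alpha> := J \<alpha> + n \<alpha> - i)))"
proof (rule lin_equiv_strand_pair_add[of \<alpha> "J \<alpha>" "n \<alpha>" i "J \<alpha> + n \<alpha> - i" _
      "\<lambda>y. normal_div m (c - 1) (J(\<alpha> := 0)) y - unit_div (\<alpha>, i) y"])
  fix y
  show "normal_div m c J y - unit_div (\<alpha>, i) y
      = normal_div m (c - 1) (J(\<alpha> := 0)) y - unit_div (\<alpha>, i) y + unit_div (bv \<alpha> (J \<alpha>)) y + unit_div (bv \<alpha> (n \<alpha>)) y"
    using normal_div_move_vS[of m c J y] normal_div_move_strand[of \<alpha> J m "c - 1" y] x j bv_end[of \<alpha>]
      bv_interior[of "J \<alpha>" \<alpha>]
    by simp
  show "normal_div m (c - 1) (J(\<alpha> := J \<alpha> + n \<alpha> - i)) y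
      = normal_div m (c - 1) (J(\<alpha> := 0)) y - unit_div (\<alpha>, i) y + unit_div (bv \<alpha> i) y
        + unit_div (bv \<alpha> (J \<alpha> + n \<alpha> - i)) y"
    using normal_div_move_strand[of \<alpha> "J(\<alpha> := J \<alpha> + n \<alpha> - i)" m "c - 1" y] x j bv_interior[of i \<alpha>]
      bv_interior[of "J \<alpha> + n \<alpha> - i" \<alpha>]
    by simp
qed (use x j in auto)

lemma lin_equiv_remove_chip_free_strand:
  assumes x: "\<alpha> \<le> g" "0 < i" "i < n \<alpha>" and j: "J \<alpha> = 0"
  shows "lin_equiv V M (\<lambda>y. normal_div m c J y - unit_div (\<alpha>, i) y)
           (normal_div (m - 1) (c - 1) (J(\<alpha> := n \<alpha> - i)))"
proof (rule lin_equiv_strand_pair_add[of \<alpha> 0 "n \<alpha>" i "n \<alpha> - i" _ "\<lambda>y. normal_div (m - 1) (c - 1) J y - unit_div (\<alpha>, i) y"])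
  fix y
  show "normal_div m c J y - unit_div (\<alpha>, i) y
      = normal_div (m - 1) (c - 1) J y - unit_div (\<alpha>, i) y + unit_div (bv \<alpha> 0) y + unit_div (bv \<alpha> (n \<alpha>)) y"
    using normal_div_move_vS[of "m - 1" c J y] normal_div_move_vN[of m c J y] bv_end[of \<alpha>] x by simp
  have "(J(\<alpha> := n \<alpha> - i))(\<alpha> := 0) = J"
    using j by auto
  then show "normal_div (m - 1) (c - 1) (J(\<alpha> := n \<alpha> - i)) y
      = normal_div (m - 1) (c - 1) J y - unit_div (\<alpha>, i) y + unit_div (bv \<alpha> i) y + unit_div (bv \<alpha> (n \<alpha> - i)) y"
    using normal_div_move_strand[of \<alpha> "J(\<alpha> := n \<alpha> - i)" "m - 1" "c - 1" y] x bv_interior[of i \<alpha>]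
      bv_interior[of "n \<alpha> - i" \<alpha>]
    by simp
qed (use x in auto)

lemma lin_equiv_remove_chip_interior:
  assumes adm: "admissible J c" and x: "\<alpha> \<le> g" "0 < i" "i < n \<alpha>"
  shows "\<exists>m' c' J'. chip_positions J' \<and> c' + int (occupied J') \<le> int g \<and> m - 1 \<le> m' \<and> c - 1 \<le> c'
           \<and> lin_equiv V M (\<lambda>y. normal_div m c J y - unit_div (\<alpha>, i) y) (normal_div m' c' J')"
proof -
  have J: "chip_positions J" and c: "c + int (occupied J) \<le> int g"
    using adm by (auto simp: admissible_def)
  have j: "J \<alpha> < n \<alpha>"
    using J x by (simp add: chip_positions_def)
  have J_upd: "chip_positions (J(\<alpha> := k))" if "k < n \<alpha>" for k
    using J that by (simp add: chip_positions_def)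
  have occ: "int (occupied (J(\<alpha> := k))) + (if 0 < J \<alpha> then 1 else 0) = int (occupied J) + (if 0 < k then 1 else 0)"
    for k
    using occupied_upd[OF x(1)] .
  consider "J \<alpha> = i" | "i < J \<alpha>" | "0 < J \<alpha>" "J \<alpha> < i" | "J \<alpha> = 0"
    by linarith
  then show ?thesis
  proof cases
    case 1
    have "lin_equiv V M (\<lambda>y. normal_div m c J y - unit_div (\<alpha>, i) y) (normal_div m c (J(\<alpha> := 0)))"
      by (rule lin_equiv_eqI) (use 1 x normal_div_move_strand[of \<alpha> J m c] in simp)
    then show ?thesis
      using J_upd[of 0] occ[of 0] 1 x c by (intro exI[of _ m] exI[of _ c] exI[of _ "J(\<alpha> := 0)"]) auto
  next
    case 2
    then show ?thesis
      using lin_equiv_remove_chip_before[of \<alpha> i J m c, OF x(1,2) 2 j] J_upd[of "J \<alpha> - i"] occ[of "J \<alpha> - i"] j c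
      by (intro exI[of _ "m - 1"] exI[of _ c] exI[of _ "J(\<alpha> := J \<alpha> - i)"]) auto
  next
    case 3
    then show ?thesis
      using lin_equiv_remove_chip_after[of \<alpha> i J m c, OF x(1,3) 3] J_upd[of "J \<alpha> + n \<alpha> - i"] occ[of "J \<alpha> + n \<alpha> - i"] x c
      by (intro exI[of _ m] exI[of _ "c - 1"] exI[of _ "J(\<alpha> := J \<alpha> + n \<alpha> - i)"]) auto
  next
    case 4
    then show ?thesis
      using lin_equiv_remove_chip_free_strand[of \<alpha> i J m c, OF x 4] J_upd[of "n \<alpha> - i"] occ[of "n \<alpha> - i"] x c
      by (intro exI[of _ "m - 1"] exI[of _ "c - 1"] exI[of _ "J(\<alpha> := n \<alpha> - i)"]) auto
  qed
qed

text \<open>Removing a chip changes the number of chips on \<open>v\<^sub>N\<close> and on \<open>v\<^sub>S\<close> by at most one each; a debt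
of one chip on \<open>v\<^sub>S\<close> can only arise when \<open>v\<^sub>S\<close> was empty, and is repaid by a sweep.\<close>

lemma lin_equiv_remove_chip:
  assumes adm: "admissible J c" and x: "x \<in> V"
  shows "\<exists>m' c' J'. admissible J' c' \<and> lin_equiv V M (\<lambda>y. normal_div m c J y - unit_div x y) (normal_div m' c' J')
           \<and> (0 < c \<longrightarrow> m - 1 \<le> m' \<and> c - 1 \<le> c')"
proof -
  have J: "chip_positions J" and c: "0 \<le> c" "c + int (occupied J) \<le> int g"
    using adm by (auto simp: admissible_def)
  have "\<exists>m' c' J'. chip_positions J' \<and> c' + int (occupied J') \<le> int g \<and> m - 1 \<le> m' \<and> c - 1 \<le> c'
      \<and> lin_equiv V M (\<lambda>y. normal_div m c J y - unit_div x y) (normal_div m' c' J')"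
    using x
  proof (cases rule: V_cases)
    case 1
    have "lin_equiv V M (\<lambda>y. normal_div m c J y - unit_div x y) (normal_div (m - 1) c J)"
      by (rule lin_equiv_eqI) (use 1 normal_div_move_vN[of m c J] in simp)
    then show ?thesis
      using J c by (intro exI[of _ "m - 1"] exI[of _ c] exI[of _ J]) auto
  next
    case 2
    have "lin_equiv V M (\<lambda>y. normal_div m c J y - unit_div x y) (normal_div m (c - 1) J)"
      by (rule lin_equiv_eqI) (use 2 normal_div_move_vS[of m c J] in simp)
    then show ?thesis
      using J c by (intro exI[of _ m] exI[of _ "c - 1"] exI[of _ J]) auto
  next
    case 3
    then show ?thesis
      using lin_equiv_remove_chip_interior[OF adm] by blast
  qed
  then obtain m1 c1 J1 where J1: "chip_positions J1" "c1 + int (occupied J1) \<le> int g"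
      and bounds: "m - 1 \<le> m1" "c - 1 \<le> c1"
      and equiv: "lin_equiv V M (\<lambda>y. normal_div m c J y - unit_div x y) (normal_div m1 c1 J1)"
    by blast
  show ?thesis
  proof (cases "0 \<le> c1")
    case True
    then show ?thesis
      using J1 bounds equiv by (auto simp: admissible_def)
  next
    case False
    then have "c1 = -1" "c = 0"
      using bounds c by auto
    obtain m2 c2 J2 where "admissible J2 c2" "lin_equiv V M (normal_div m1 (-1) J1) (normal_div m2 c2 J2)"
      using lin_equiv_sweep_admissible[OF J1(1)] .
    then show ?thesis
      using equiv lin_equiv_trans \<open>c1 = -1\<close> \<open>c = 0\<close> by blast
  qed
qed

lemma rank_ge_normal_div:
  assumes adm: "admissible J c" and a: "0 \<le> a"
    and r: "int r \<le> min a c \<or> int r \<le> a + c + int (occupied J) - int g"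
  shows "rank_ge V M (normal_div a c J) r"
  unfolding rank_ge_def
proof (intro allI impI, elim conjE)
  fix E assume E: "effective V E" "deg V E = int r"
  define P where "P t D \<longleftrightarrow> (\<exists>m' c' J'. D = normal_div m' c' J' \<and> admissible J' c'
      \<and> (int t \<le> c \<longrightarrow> a - int t \<le> m' \<and> c - int t \<le> c'))" for t D
  have "\<exists>D'. P (Suc t) D' \<and> lin_equiv V M (\<lambda>y. D y - unit_div x y) D'" if "P t D" "x \<in> V" for t D x
  proof -
    obtain m' c' J' where D: "D = normal_div m' c' J'" "admissible J' c'"
        and bounds: "int t \<le> c \<longrightarrow> a - int t \<le> m' \<and> c - int t \<le> c'"
      using \<open>P t D\<close> unfolding P_def by blast
    obtain m'' c'' J'' where "admissible J'' c''" "lin_equiv V M (\<lambda>y. D y - unit_div x y) (normal_div m'' c'' J'')"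
        "0 < c' \<longrightarrow> m' - 1 \<le> m'' \<and> c' - 1 \<le> c''"
      using lin_equiv_remove_chip[OF D(2) \<open>x \<in> V\<close>] D(1) by blast
    moreover have "int (Suc t) \<le> c \<longrightarrow> a - int (Suc t) \<le> m'' \<and> c - int (Suc t) \<le> c''"
      using bounds calculation(3) by auto
    ultimately show ?thesis
      unfolding P_def by blast
  qed
  moreover have "P 0 (normal_div a c J)"
    using adm unfolding P_def by auto
  ultimately obtain D' where "P r D'" and equiv: "lin_equiv V M (\<lambda>y. normal_div a c J y - E y) D'"
    using lin_equiv_subtract_effective[OF finite_V _ _ E] by blast
  then obtain m' c' J' where D': "D' = normal_div m' c' J'" "admissible J' c'"
      and bounds: "int r \<le> c \<longrightarrow> a - int r \<le> m' \<and> c - int r \<le> c'"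
    unfolding P_def by blast
  have J: "chip_positions J" "chip_positions J'" and c': "0 \<le> c'" "c' + int (occupied J') \<le> int g"
    using adm D'(2) by (auto simp: admissible_def)
  have "m' + c' + int (occupied J') = a + c + int (occupied J) - int r"
    using deg_lin_equiv_banana[OF equiv] deg_diff[of V "normal_div a c J" E] deg_normal_div[OF J(1)] deg_normal_div[OF J(2)] E(2) D'(1)
    by simp
  then have "0 \<le> m'"
    using r bounds c' by auto
  then show "\<exists>D'. lin_equiv V M (\<lambda>x. normal_div a c J x - E x) D' \<and> effective V D'"
    using equiv D'(1) c' effective_normal_div by blast
qed

section \<open>Burning: the upper bound\<close>

lemma cut_deg_eq_sum: "cut_deg V M A x = (\<Sum>y\<in>V. int (M x y) * (if y \<in> A then 0 else 1))"
proof -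
  have "(\<Sum>y\<in>V. int (M x y) * (if y \<in> A then 0 else 1)) = (\<Sum>y\<in>V. if y \<notin> A then int (M x y) else 0)"
    by (intro sum.cong) auto
  moreover have "V - A = {y\<in>V. y \<notin> A}"
    by auto
  ultimately show ?thesis
    unfolding cut_deg_def using sum.inter_filter[OF finite_V, of "\<lambda>y. int (M x y)" "\<lambda>y. y \<notin> A"] by simp
qed

lemma cut_deg_interior:
  "\<alpha> \<le> g \<Longrightarrow> 0 < p \<Longrightarrow> p < n \<alpha> \<Longrightarrow>
    cut_deg V M A (\<alpha>, p) = (if bv \<alpha> (p - 1) \<in> A then 0 else 1) + (if bv \<alpha> (Suc p) \<in> A then 0 else 1)"
  unfolding cut_deg_eq_sum by (rule sum_M_interior)

lemma cut_deg_vN: "cut_deg V M A vN = (\<Sum>\<beta>\<le>g. if bv \<beta> 1 \<in> A then 0 else 1)"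
  unfolding cut_deg_eq_sum by (rule sum_M_vN)

lemma cut_deg_vS: "cut_deg V M A vS = (\<Sum>\<beta>\<le>g. if bv \<beta> (n \<beta> - 1) \<in> A then 0 else 1)"
  unfolding cut_deg_eq_sum by (rule sum_M_vS)

text \<open>A set \<open>A\<close> that a fire cannot enter: each of its vertices holds at least as many chips as
there are edges leaving \<open>A\<close>. Along a strand such a set can only stop at a chip.\<close>

context
  fixes A J m c
  assumes unburnt: "\<forall>x\<in>A. cut_deg V M A x \<le> normal_div m c J x"
begin

lemma unburnt_strand_down:
  "(\<alpha>, p) \<in> A \<Longrightarrow> \<alpha> \<le> g \<Longrightarrow> 0 < p \<Longrightarrow> p < n \<alpha> \<Longrightarrow> (\<forall>r. 0 < r \<longrightarrow> r \<le> p \<longrightarrow> J \<alpha> \<noteq> r) \<Longrightarrow> vN \<in> A"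
proof (induction p)
  case 0
  then show ?case by simp
next
  case (Suc p)
  have "cut_deg V M A (\<alpha>, Suc p) \<le> normal_div m c J (\<alpha>, Suc p)"
    using unburnt Suc.prems(1) by blast
  also have "\<dots> = 0"
    using Suc.prems by (simp add: normal_div_interior)
  finally have "bv \<alpha> p \<in> A"
    using cut_deg_interior[of \<alpha> "Suc p" A] Suc.prems by (auto split: if_splits)
  then show ?case
    using Suc.IH Suc.prems bv_interior[of p \<alpha>] by (cases "p = 0") auto
qed

lemma unburnt_strand_up:
  "(\<alpha>, p) \<in> A \<Longrightarrow> \<alpha> \<le> g \<Longrightarrow> 0 < p \<Longrightarrow> p < n \<alpha> \<Longrightarrow> (\<forall>r. p \<le> r \<longrightarrow> r < n \<alpha> \<longrightarrow> J \<alpha> \<noteq> r) \<Longrightarrow> vS \<in> A"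
proof (induction "n \<alpha> - p" arbitrary: p)
  case 0
  then show ?case by simp
next
  case (Suc k)
  have "cut_deg V M A (\<alpha>, p) \<le> normal_div m c J (\<alpha>, p)"
    using unburnt Suc.prems(1) by blast
  also have "\<dots> = 0"
    using Suc.prems by (simp add: normal_div_interior)
  finally have "bv \<alpha> (Suc p) \<in> A"
    using cut_deg_interior[of \<alpha> p A] Suc.prems by (auto split: if_splits)
  show ?case
  proof (cases "Suc p = n \<alpha>")
    case True
    then show ?thesis using \<open>bv \<alpha> (Suc p) \<in> A\<close> bv_end[of \<alpha>] Suc.prems by simp
  next
    case False
    then have "(\<alpha>, Suc p) \<in> A"
      using \<open>bv \<alpha> (Suc p) \<in> A\<close> bv_interior[of "Suc p" \<alpha>] Suc.prems by simp
    then show ?thesis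
      using Suc.hyps(1)[of "Suc p"] Suc.hyps(2) Suc.prems False by simp
  qed
qed

lemma unburnt_free_strand:
  "(\<alpha>, p) \<in> A \<Longrightarrow> \<alpha> \<le> g \<Longrightarrow> 0 < p \<Longrightarrow> p < n \<alpha> \<Longrightarrow> J \<alpha> = 0 \<Longrightarrow> vN \<in> A \<and> vS \<in> A"
  using unburnt_strand_down[of \<alpha> p] unburnt_strand_up[of \<alpha> p] by auto

lemma unburnt_interior_reaches_pole:
  assumes "(\<alpha>, p) \<in> A" "\<alpha> \<le> g" "0 < p" "p < n \<alpha>"
  shows "vN \<in> A \<or> vS \<in> A"
proof -
  consider "p < J \<alpha>" | "J \<alpha> < p" | "J \<alpha> = p"
    by linarith
  then show ?thesis
  proof cases
    case 1
    then show ?thesis using unburnt_strand_down[of \<alpha> p] assms by auto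
  next
    case 2
    then show ?thesis using unburnt_strand_up[of \<alpha> p] assms by auto
  next
    case 3
    have "cut_deg V M A (\<alpha>, p) \<le> normal_div m c J (\<alpha>, p)"
      using unburnt assms(1) by blast
    also have "\<dots> = 1"
      using assms 3 by (simp add: normal_div_interior)
    finally have "bv \<alpha> (p - 1) \<in> A \<or> bv \<alpha> (Suc p) \<in> A"
      using cut_deg_interior[of \<alpha> p A] assms by (auto split: if_splits)
    then show ?thesis
    proof
      assume below: "bv \<alpha> (p - 1) \<in> A"
      show ?thesis
      proof (cases "p = 1")
        case False
        then have "(\<alpha>, p - 1) \<in> A" "0 < p - 1" "p - 1 < n \<alpha>"
          using below bv_interior[of "p - 1" \<alpha>] assms by auto
        moreover have "\<forall>r. 0 < r \<longrightarrow> r \<le> p - 1 \<longrightarrow> J \<alpha> \<noteq> r"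
          using 3 by auto
        ultimately show ?thesis
          using unburnt_strand_down[of \<alpha> "p - 1"] assms by blast
      qed (use below in simp)
    next
      assume above: "bv \<alpha> (Suc p) \<in> A"
      show ?thesis
      proof (cases "Suc p = n \<alpha>")
        case False
        then have "(\<alpha>, Suc p) \<in> A" "Suc p < n \<alpha>"
          using above bv_interior[of "Suc p" \<alpha>] assms by auto
        moreover have "\<forall>r. Suc p \<le> r \<longrightarrow> r < n \<alpha> \<longrightarrow> J \<alpha> \<noteq> r"
          using 3 by auto
        ultimately show ?thesis
          using unburnt_strand_up[of \<alpha> "Suc p"] assms by blast
      qed (use above bv_end[of \<alpha>] assms in simp)
    qed
  qed
qed

lemma unburnt_contains_pole:
  assumes "A \<subseteq> V" "A \<noteq> {}"
  shows "vN \<in> A \<or> vS \<in> A"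
proof -
  obtain x where x: "x \<in> A"
    using assms(2) by blast
  then have "x \<in> V"
    using assms(1) by blast
  then show ?thesis
    using x unburnt_interior_reaches_pole by (cases rule: V_cases) auto
qed

lemma unburnt_vN_bound:
  assumes "vN \<in> A" "vS \<notin> A"
  shows "int g + 1 - int (occupied J) \<le> m"
proof -
  have "(\<Sum>\<beta>\<le>g. if J \<beta> = 0 then 1 else 0) \<le> (\<Sum>\<beta>\<le>g. if bv \<beta> 1 \<in> A then 0 else (1::int))"
  proof (rule sum_mono)
    fix \<beta> assume \<beta>: "\<beta> \<in> {..g}"
    have "bv \<beta> 1 \<notin> A" if "J \<beta> = 0"
    proof (cases "n \<beta> = 1")
      case True
      then show ?thesis using assms(2) bv_end[of \<beta>] \<beta> by simp
    next
      case False
      then show ?thesis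
        using unburnt_free_strand[of \<beta> 1] strand_pos[of \<beta>] bv_interior[of 1 \<beta>] \<beta> that assms(2) by force
    qed
    then show "(if J \<beta> = 0 then 1 else 0) \<le> (if bv \<beta> 1 \<in> A then 0 else (1::int))"
      by auto
  qed
  also have "\<dots> = cut_deg V M A vN"
    by (simp add: cut_deg_vN)
  also have "\<dots> \<le> m"
    using unburnt assms(1) normal_div_vN by metis
  finally show ?thesis
    using sum_free_strands[of J] by simp
qed

lemma unburnt_vS_bound:
  assumes "chip_positions J" "vS \<in> A" "vN \<notin> A"
  shows "int g + 1 - int (occupied J) \<le> c"
proof -
  have "(\<Sum>\<beta>\<le>g. if J \<beta> = 0 then 1 else 0) \<le> (\<Sum>\<beta>\<le>g. if bv \<beta> (n \<beta> - 1) \<in> A then 0 else (1::int))"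
  proof (rule sum_mono)
    fix \<beta> assume \<beta>: "\<beta> \<in> {..g}"
    have "bv \<beta> (n \<beta> - 1) \<notin> A" if "J \<beta> = 0"
    proof (cases "n \<beta> = 1")
      case True
      then show ?thesis using assms(3) by simp
    next
      case False
      then show ?thesis
        using unburnt_free_strand[of \<beta> "n \<beta> - 1"] strand_pos[of \<beta>] bv_interior[of "n \<beta> - 1" \<beta>] \<beta> that assms(3)
        by force
    qed
    then show "(if J \<beta> = 0 then 1 else 0) \<le> (if bv \<beta> (n \<beta> - 1) \<in> A then 0 else (1::int))"
      by auto
  qed
  also have "\<dots> = cut_deg V M A vS"
    by (simp add: cut_deg_vS)
  also have "\<dots> \<le> c"
    using unburnt assms(1,2) normal_div_vS by metis
  finally show ?thesis
    using sum_free_strands[of J] by simp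
qed

end

lemma not_effective_vN_debt:
  assumes J: "chip_positions J" and "m < 0" "c + int (occupied J) \<le> int g"
    and "lin_equiv V M (normal_div m c J) D'"
  shows "\<not> effective V D'"
proof (rule dhar_burning_not_effective[OF finite_V poles_in_V(1) _ _ assms(4)])
  show "normal_div m c J vN < 0"
    using assms(2) by (simp add: normal_div_vN)
next
  fix A assume A: "A \<subseteq> V - {vN}" "A \<noteq> {}"
  show "\<exists>x\<in>A. normal_div m c J x < cut_deg V M A x"
  proof (rule ccontr)
    assume "\<not> ?thesis"
    then have unburnt: "\<forall>x\<in>A. cut_deg V M A x \<le> normal_div m c J x"
      by force
    then have "vS \<in> A"
      using unburnt_contains_pole[OF unburnt] A by blast
    then show False
      using unburnt_vS_bound[OF unburnt J] A assms(3) by auto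
  qed
qed

lemma not_effective_vS_debt:
  assumes J: "chip_positions J" and "c < 0" "m + int (occupied J) \<le> int g"
    and "lin_equiv V M (normal_div m c J) D'"
  shows "\<not> effective V D'"
proof (rule dhar_burning_not_effective[OF finite_V poles_in_V(2) _ _ assms(4)])
  show "normal_div m c J vS < 0"
    using assms(2) J by (simp add: normal_div_vS)
next
  fix A assume A: "A \<subseteq> V - {vS}" "A \<noteq> {}"
  show "\<exists>x\<in>A. normal_div m c J x < cut_deg V M A x"
  proof (rule ccontr)
    assume "\<not> ?thesis"
    then have unburnt: "\<forall>x\<in>A. cut_deg V M A x \<le> normal_div m c J x"
      by force
    then have "vN \<in> A"
      using unburnt_contains_pole[OF unburnt] A by blast
    then show False
      using unburnt_vN_bound[OF unburnt] A assms(3) by auto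
  qed
qed

lemma not_rank_ge_normal_div:
  assumes J: "chip_positions J" and uw: "0 \<le> u" "0 \<le> w"
    and debt: "(a - u < 0 \<and> c - w + int (occupied J) \<le> int g) \<or> (c - w < 0 \<and> a - u + int (occupied J) \<le> int g)"
  shows "\<not> rank_ge V M (normal_div a c J) (nat (u + w))"
proof
  assume "rank_ge V M (normal_div a c J) (nat (u + w))"
  moreover define E where "E x = u * unit_div vN x + w * unit_div vS x" for x
  moreover have "effective V E"
    using uw by (simp add: effective_def E_def unit_div_def)
  moreover have "deg V E = int (nat (u + w))"
    using uw deg_unit_div[OF finite_V poles_in_V(1)] deg_unit_div[OF finite_V poles_in_V(2)]
    unfolding deg_def E_def by (simp add: sum.distrib flip: sum_distrib_left)
  ultimately obtain D' where D': "lin_equiv V M (\<lambda>x. normal_div a c J x - E x) D'" "effective V D'"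
    unfolding rank_ge_def by blast
  have "(\<lambda>x. normal_div a c J x - E x) = normal_div (a - u) (c - w) J"
    using poles_distinct by (auto simp: normal_div_def E_def unit_div_def fun_eq_iff)
  then have "lin_equiv V M (normal_div (a - u) (c - w) J) D'"
    using D'(1) by simp
  then show False
    using debt D'(2) not_effective_vN_debt[OF J] not_effective_vS_debt[OF J] by blast
qed

lemma rank_ge_normal_div_imp_le:
  assumes adm: "admissible J c" and rank: "rank_ge V M (normal_div a c J) r"
  shows "int r \<le> min a c + max 0 (max a c - (int g - int (occupied J)))"
proof (rule ccontr)
  assume r: "\<not> ?thesis"
  have J: "chip_positions J" and c: "0 \<le> c" "c + int (occupied J) \<le> int g"
    using adm by (auto simp: admissible_def)
  consider "a + int (occupied J) \<le> int g" "a \<le> c" | "a + int (occupied J) \<le> int g" "c < a"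
    | "int g < a + int (occupied J)"
    by linarith
  then show False
  proof cases
    case 1
    then show False
      using not_rank_ge_normal_div[OF J, of "int r" 0 a c] rank r c by (simp add: min_def max_def split: if_splits)
  next
    case 2
    then show False
      using not_rank_ge_normal_div[OF J, of 0 "int r" a c] rank r c by (simp add: min_def max_def split: if_splits)
  next
    case 3
    define k where "k = int g - int (occupied J)"
    have "\<not> rank_ge V M (normal_div a c J) (nat ((a - k) + (int r - (a - k))))"
      using not_rank_ge_normal_div[OF J, of "a - k" "int r - (a - k)" a c] 3 r c
      unfolding k_def by (simp add: min_def max_def split: if_splits)
    then show False
      using rank by simp
  qed
qed

theorem rank_normal_div:
  assumes adm: "admissible J c" and a: "0 \<le> a"
  shows "rank V M (normal_div a c J) = min a c + max 0 (max a c - (int g - int (occupied J)))"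
proof (rule rank_eqI)
  show "0 \<le> min a c + max 0 (max a c - (int g - int (occupied J)))"
    using adm a by (simp add: admissible_def)
  fix r
  have "int r \<le> min a c + max 0 (max a c - (int g - int (occupied J)))
      \<Longrightarrow> int r \<le> min a c \<or> int r \<le> a + c + int (occupied J) - int g"
    by (auto simp: min_def max_def split: if_splits)
  then show "rank_ge V M (normal_div a c J) r \<longleftrightarrow> int r \<le> min a c + max 0 (max a c - (int g - int (occupied J)))"
    using rank_ge_normal_div[OF adm a] rank_ge_normal_div_imp_le[OF adm] by blast
qed

lemma strand_divisor_chip:
  fixes E :: "nat \<times> nat \<Rightarrow> int"
  assumes E_eff: "\<forall>x. E x \<ge> 0"
    and E_strand: "\<forall>\<alpha>\<le>g. (\<Sum>i\<in>{0<..<n \<alpha>}. E (bv \<alpha> i)) \<le> 1"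
    and x: "\<alpha> \<le> g" "0 < i" "i < n \<alpha>" "0 < E (\<alpha>, i)"
  shows "E (\<alpha>, i) = 1" and "\<And>j. 0 < j \<Longrightarrow> j < n \<alpha> \<Longrightarrow> 0 < E (\<alpha>, j) \<Longrightarrow> j = i"
proof -
  have sum_le: "(\<Sum>j\<in>I. E (\<alpha>, j)) \<le> 1" if "I \<subseteq> {0<..<n \<alpha>}" for I
  proof -
    have "(\<Sum>j\<in>I. E (\<alpha>, j)) = (\<Sum>j\<in>I. E (bv \<alpha> j))"
      using that bv_interior by (intro sum.cong) auto
    also have "\<dots> \<le> (\<Sum>j\<in>{0<..<n \<alpha>}. E (bv \<alpha> j))"
      by (rule sum_mono2) (use that in \<open>auto intro: E_eff[rule_format]\<close>)
    also have "\<dots> \<le> 1"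
      using E_strand x(1) by blast
    finally show ?thesis .
  qed
  show "E (\<alpha>, i) = 1"
    using sum_le[of "{i}"] x by simp
  show "j = i" if "0 < j" "j < n \<alpha>" "0 < E (\<alpha>, j)" for j
  proof (rule ccontr)
    assume "j \<noteq> i"
    then show False
      using sum_le[of "{i, j}"] that x by simp
  qed
qed

lemma strand_divisor_obtains_positions:
  assumes E_eff: "\<forall>x. E x \<ge> 0"
    and E_supp: "\<forall>x. E x \<noteq> 0 \<longrightarrow> x \<in> V \<and> x \<noteq> vN \<and> x \<noteq> vS"
    and E_strand: "\<forall>\<alpha>\<le>g. (\<Sum>i\<in>{0<..<n \<alpha>}. E (bv \<alpha> i)) \<le> 1"
  obtains J where "chip_positions J" "E = strand_chips J"
proof -
  define P where "P \<alpha> i \<longleftrightarrow> 0 < i \<and> i < n \<alpha> \<and> E (\<alpha>, i) > 0" for \<alpha> i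
  define J where "J \<alpha> = (if \<exists>i. P \<alpha> i then (SOME i. P \<alpha> i) else 0)" for \<alpha>
  have J_P: "P \<alpha> (J \<alpha>)" if "\<exists>i. P \<alpha> i" for \<alpha>
    using someI_ex[OF that] that by (simp add: J_def)
  have "J \<beta> < n \<beta>" if "\<beta> \<le> g" for \<beta>
  proof (cases "\<exists>i. P \<beta> i")
    case True
    then show ?thesis using J_P[OF True] by (simp add: P_def)
  next
    case False
    then show ?thesis using strand_pos[OF that] by (simp add: J_def)
  qed
  then have "chip_positions J"
    by (simp add: chip_positions_def)
  moreover have "E x = strand_chips J x" for x
  proof (cases "E x = 0")
    case False
    then have supp: "x \<in> V \<and> x \<noteq> vN \<and> x \<noteq> vS"
      by (rule mp[OF spec[OF E_supp, of x]])
    then obtain \<beta> p where x: "x = (\<beta>, p)" "\<beta> \<le> g" "0 < p" "p < n \<beta>"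
      by (elim conjE V_cases) simp_all
    have pos: "0 < E (\<beta>, p)"
      using False E_eff[rule_format, of x] x by simp
    note chip = strand_divisor_chip[OF E_eff E_strand x(2-4) pos]
    have "P \<beta> p"
      using x pos by (simp add: P_def)
    then have "J \<beta> = p"
      using J_P[of \<beta>] chip(2)[of "J \<beta>"] by (auto simp: P_def)
    then show ?thesis
      using x chip(1) by (simp add: strand_chips_interior)
  next
    case True
    obtain \<beta> p where x: "x = (\<beta>, p)"
      by (cases x)
    have "\<not> (\<beta> \<le> g \<and> 0 < p \<and> J \<beta> = p)"
    proof
      assume chip: "\<beta> \<le> g \<and> 0 < p \<and> J \<beta> = p"
      then have "P \<beta> p"
        using J_P[of \<beta>] by (auto simp: J_def split: if_splits)
      then show False
        using True x by (simp add: P_def)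
    qed
    then show ?thesis
      using True x by (simp add: strand_chips_def)
  qed
  ultimately show ?thesis
    using that by blast
qed

end

theorem mainTheorem14:
  fixes g :: nat and n :: "nat \<Rightarrow> nat" and E :: "nat \<times> nat \<Rightarrow> int" and a b :: int
  assumes n_pos: "\<forall>\<alpha>\<le>g. n \<alpha> \<ge> 1"
    and E_eff: "\<forall>x. E x \<ge> 0"
    and E_supp: "\<forall>x. E x \<noteq> 0 \<longrightarrow> x \<in> banana_V g n \<and> x \<noteq> (0,0) \<and> x \<noteq> (0, n 0)"
    and E_strand: "\<forall>\<alpha>\<le>g. (\<Sum>i\<in>{0<..<n \<alpha>}. E (bvtx n \<alpha> i)) \<le> 1"
    and a_nonneg: "a \<ge> 0"
    and b_nonneg: "0 \<le> b"
    and b_le: "b \<le> int g - deg (banana_V g n) E"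
  shows "rank (banana_V g n) (banana_m g n)
           (\<lambda>x. (if x = (0,0) then a else 0) + (if x = (0, n 0) then b else 0) + E x)
         = min a b + max 0 (max a b - (int g - deg (banana_V g n) E))"
proof -
  interpret banana g n
    using n_pos by unfold_locales simp
  obtain J where J: "chip_positions J" "E = strand_chips J"
    using strand_divisor_obtains_positions[OF E_eff E_supp E_strand] .
  have deg_E: "deg V E = int (occupied J)"
    using deg_strand_chips[OF J(1)] J(2) by simp
  have "(\<lambda>x. (if x = (0,0) then a else 0) + (if x = (0, n 0) then b else 0) + E x) = normal_div a b J"
    using J(2) by (simp add: fun_eq_iff normal_div_def)
  moreover have "admissible J b"
    using J(1) b_nonneg b_le deg_E by (simp add: admissible_def)
  ultimately show ?thesis
    using rank_normal_div[OF _ a_nonneg] deg_E by simp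
qed

end
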